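(* There exists $p\in\mathcal P$ such that $D_{\mu(p)}(p)\neq N$ and $D_{\mu(p)}(p)\cap D_{\mu(p^r)}(p^r)\neq\varnothing$ if and only if $(h,n)\notin T_3$, where $T_3=\{(h,n): n=2\}\cup\{(3,3)\}$.
   Context: Let $n,h\ge2$ be integers, $N=\{1,\dots,n\}$, $H=\{1,\dots,h\}$. $\mathcal P$ is the set of $h$-tuples $p=(p_1,\dots,p_h)$ of linear orders on $N$; $p^r$ is obtained by reversing each $p_i$; $x>_{p_i}y$ means $x\ne y$ and $p_i$ ranks $x$ above $y$. For an integer $\mu$ with $h/2<\mu\le h$, $D_\mu(p)=\{x\in N: \forall y\in N,\ |\{i: y>_{p_i}x\}|<\mu\}$, and $\mu(p)=\min\{\mu\in\mathbb N\cap(h/2,h]: D_\mu(p)\neq\varnothing\}$. *)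

theory Defs
  imports Main
begin

(* A linear order on N is a relation r with (a,b) \<in> r meaning "a is ranked at or below b".
   x >_r y : x \<noteq> y and r ranks x above y. *)
definition above :: "(nat \<times> nat) set \<Rightarrow> nat \<Rightarrow> nat \<Rightarrow> bool" where
  "above r x y \<longleftrightarrow> x \<noteq> y \<and> (y, x) \<in> r"

definition profiles :: "nat \<Rightarrow> nat \<Rightarrow> (nat \<Rightarrow> (nat \<times> nat) set) set" where
  "profiles n h = {p. \<forall>i\<in>{1..h}. linear_order_on {1..n} (p i)}"

definition rev_profile :: "(nat \<Rightarrow> (nat \<times> nat) set) \<Rightarrow> (nat \<Rightarrow> (nat \<times> nat) set)" where
  "rev_profile p = (\<lambda>i. converse (p i))"

definition Dmu :: "nat \<Rightarrow> nat \<Rightarrow> nat \<Rightarrow> (nat \<Rightarrow> (nat \<times> nat) set) \<Rightarrow> nat set" where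
  "Dmu n h \<mu> p = {x \<in> {1..n}. \<forall>y\<in>{1..n}. card {i \<in> {1..h}. above (p i) y x} < \<mu>}"

definition mu_of :: "nat \<Rightarrow> nat \<Rightarrow> (nat \<Rightarrow> (nat \<times> nat) set) \<Rightarrow> nat" where
  "mu_of n h p = (LEAST \<mu>. h < 2 * \<mu> \<and> \<mu> \<le> h \<and> Dmu n h \<mu> p \<noteq> {})"

definition T3 :: "(nat \<times> nat) set" where
  "T3 = {(h, n). n = 2} \<union> {(3, 3)}"

end

theory Submission
  imports Defs
begin

(* Write votes y x for the number of voters ranking y above x; for distinct x and y the two
   counts add up to h, and reversing the profile swaps them.
   For n = 2, an alternative z outside D_mu(p)(p) is beaten by the other alternative x with at
   least mu(p) votes; then z lies in D_mu(p)(p^r), so mu(p^r) <= mu(p), which keeps x out of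
   D_mu(p^r)(p^r).
   For h = n = 3, a majority winner of p leaves one of the two other alternatives as a majority
   winner of p^r, and no alternative is a majority winner of both; so a common element forces
   mu(p) = mu(p^r) = 3. An alternative outside D_3(p) is then beaten unanimously, and the absence
   of majority winners in p and in p^r produces a voter with a cyclic preference.
   In all other cases take h div 2 voters with each of the orders 1 2 3 n ... 4 and
   2 3 n ... 4 1, plus one voter 3 n ... 4 1 2 if h is odd. Alternative 1 beats, and is beaten
   by, each other alternative with at most h div 2 + h mod 2 votes; for odd h every alternative
   beats and is beaten by another one with a strict majority (the cycle 1 > 2 > 3 > 1 and
   3 > z > 1 for z >= 4). Hence mu(p) = mu(p^r) = h div 2 + 1 + h mod 2 with 1 in both sets,
   while 2 (for n = 3) or 3 (for n >= 4) beats its successor with that many votes. *)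

definition votes :: "nat \<Rightarrow> (nat \<Rightarrow> (nat \<times> nat) set) \<Rightarrow> nat \<Rightarrow> nat \<Rightarrow> nat" where
  "votes h p y x = card {i \<in> {1..h}. above (p i) y x}"

abbreviation Dmin :: "nat \<Rightarrow> nat \<Rightarrow> (nat \<Rightarrow> (nat \<times> nat) set) \<Rightarrow> nat set" where
  "Dmin n h p \<equiv> Dmu n h (mu_of n h p) p"

lemma Dmu_eq: "Dmu n h \<mu> p = {x \<in> {1..n}. \<forall>y\<in>{1..n}. votes h p y x < \<mu>}"
  by (simp add: Dmu_def votes_def)

lemma Dmu_subset: "Dmu n h \<mu> p \<subseteq> {1..n}"
  by (auto simp: Dmu_eq)

lemma not_in_DmuI: "y \<in> {1..n} \<Longrightarrow> \<mu> \<le> votes h p y x \<Longrightarrow> x \<notin> Dmu n h \<mu> p"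
  by (auto simp: Dmu_eq not_less)

lemma Dmu_emptyI: "(\<And>x. x \<in> {1..n} \<Longrightarrow> \<exists>y\<in>{1..n}. \<mu> \<le> votes h p y x) \<Longrightarrow> Dmu n h \<mu> p = {}"
  using Dmu_subset not_in_DmuI by blast

lemma votes_rev_profile: "votes h (rev_profile p) y x = votes h p x y"
  unfolding votes_def rev_profile_def above_def by (rule arg_cong[where f = card]) auto

lemma votes_le: "votes h p y x \<le> h"
proof -
  have "votes h p y x \<le> card {1..h}" unfolding votes_def by (rule card_mono) auto
  then show ?thesis by simp
qed

lemma votes_self [simp]: "votes h p x x = 0"
  by (simp add: votes_def above_def)

lemma votes_eq_iff_unanimous: "votes h p y x = h \<longleftrightarrow> (\<forall>i\<in>{1..h}. above (p i) y x)"
proof -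
  let ?A = "{i \<in> {1..h}. above (p i) y x}"
  have sub: "?A \<subseteq> {1..h}" by blast
  have "votes h p y x = h \<longleftrightarrow> ?A = {1..h}"
  proof
    assume "votes h p y x = h"
    then show "?A = {1..h}" using card_subset_eq[OF finite_atLeastAtMost sub] by (simp add: votes_def)
  qed (simp add: votes_def)
  also have "\<dots> \<longleftrightarrow> (\<forall>i\<in>{1..h}. above (p i) y x)" by blast
  finally show ?thesis .
qed

lemma votes_common_voter:
  assumes "h < votes h p a b + votes h p c d"
  obtains i where "i \<in> {1..h}" "above (p i) a b" "above (p i) c d"
proof -
  let ?A = "{i \<in> {1..h}. above (p i) a b}" and ?B = "{i \<in> {1..h}. above (p i) c d}"
  have "card (?A \<union> ?B) \<le> card {1..h}" by (rule card_mono) auto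
  moreover have "card ?A + card ?B = card (?A \<union> ?B) + card (?A \<inter> ?B)" by (rule card_Un_Int) auto
  ultimately have "?A \<inter> ?B \<noteq> {}" using assms unfolding votes_def by auto
  then show thesis using that by blast
qed

lemma profiles_linear_order_on: "p \<in> profiles n h \<Longrightarrow> i \<in> {1..h} \<Longrightarrow> linear_order_on {1..n} (p i)"
  by (simp add: profiles_def)

lemma rev_profile_in_profiles: "p \<in> profiles n h \<Longrightarrow> rev_profile p \<in> profiles n h"
  by (simp add: profiles_def rev_profile_def)

lemma rev_profile_rev_profile [simp]: "rev_profile (rev_profile p) = p"
  by (simp add: rev_profile_def)

lemma above_iff_not_above:
  assumes "linear_order_on A r" "x \<in> A" "y \<in> A" "x \<noteq> y"
  shows "above r x y \<longleftrightarrow> \<not> above r y x"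
  using assms unfolding above_def linear_order_on_def partial_order_on_def total_on_def
  by (auto dest: antisymD)

lemma not_above_cycle:
  assumes "linear_order_on A r" "above r a b" "above r b c"
  shows "\<not> above r c a"
proof -
  have "trans r" "antisym r"
    using assms(1) by (auto simp: linear_order_on_def partial_order_on_def preorder_on_def)
  with assms(2,3) show ?thesis
    unfolding above_def by (metis antisymD transD)
qed

lemma linear_order_on_has_top:
  assumes "finite A" "A \<noteq> {}" "linear_order_on A r"
  obtains x where "x \<in> A" "\<And>y. y \<in> A \<Longrightarrow> \<not> above r y x"
proof -
  have "r \<subseteq> A \<times> A"
    using assms(3) by (auto simp: linear_order_on_def partial_order_on_def preorder_on_def refl_on_def)
  then have "finite r" using assms(1) by (auto intro: finite_subset)
  then have "wf ((r - Id)\<inverse>)"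
    using linear_order_on_acyclic[OF assms(3)] by (auto intro: finite_acyclic_wf_converse)
  then obtain x where "x \<in> A" "\<And>y. (y, x) \<in> (r - Id)\<inverse> \<Longrightarrow> y \<notin> A"
    using assms(2) by (metis ex_in_conv wfE_min)
  then show thesis using that unfolding above_def by blast
qed

lemma votes_add_votes:
  assumes "p \<in> profiles n h" "x \<in> {1..n}" "y \<in> {1..n}" "x \<noteq> y"
  shows "votes h p y x + votes h p x y = h"
proof -
  let ?A = "{i \<in> {1..h}. above (p i) y x}" and ?B = "{i \<in> {1..h}. above (p i) x y}"
  have "above (p i) y x \<longleftrightarrow> \<not> above (p i) x y" if "i \<in> {1..h}" for i
    using above_iff_not_above[OF profiles_linear_order_on[OF assms(1) that] assms(3,2)] assms(4) by blast
  then have "?A \<union> ?B = {1..h}" "?A \<inter> ?B = {}" by blast+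
  then have "card ?A + card ?B = card {1..h}" using card_Un_disjoint[of ?A ?B] by simp
  then show ?thesis unfolding votes_def by simp
qed

lemma Dmu_inter_rev_profile_empty:
  assumes "p \<in> profiles n h" "2 \<le> n" "2 * \<mu> \<le> h + 1"
  shows "Dmu n h \<mu> p \<inter> Dmu n h \<mu> (rev_profile p) = {}"
proof (rule ccontr)
  assume "Dmu n h \<mu> p \<inter> Dmu n h \<mu> (rev_profile p) \<noteq> {}"
  then obtain x where x: "x \<in> {1..n}" "\<forall>y\<in>{1..n}. votes h p y x < \<mu> \<and> votes h p x y < \<mu>"
    by (auto simp: Dmu_eq votes_rev_profile)
  define y where "y = (if x = 1 then 2 else 1 :: nat)"
  have y: "y \<in> {1..n}" "y \<noteq> x" using assms(2) by (auto simp: y_def)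
  show False
    using x y votes_add_votes[OF assms(1) x(1) y(1) y(2)[symmetric]] assms(3) by fastforce
qed

lemma Dmu_h_nonempty:
  assumes "p \<in> profiles n h" "1 \<le> h" "1 \<le> n"
  shows "Dmu n h h p \<noteq> {}"
proof -
  obtain x where x: "x \<in> {1..n}" "\<And>y. y \<in> {1..n} \<Longrightarrow> \<not> above (p 1) y x"
    using linear_order_on_has_top[OF _ _ profiles_linear_order_on[OF assms(1)]] assms(2,3) by auto
  have "votes h p y x < h" if "y \<in> {1..n}" for y
    using x(2)[OF that] votes_le[of h p y x] votes_eq_iff_unanimous[of h p y x] assms(2) by fastforce
  then show ?thesis using x(1) by (auto simp: Dmu_eq)
qed

lemma mu_of_bounds:
  assumes "p \<in> profiles n h" "1 \<le> h" "1 \<le> n"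
  shows "h < 2 * mu_of n h p" "mu_of n h p \<le> h" "Dmin n h p \<noteq> {}"
proof -
  have "h < 2 * mu_of n h p \<and> mu_of n h p \<le> h \<and> Dmin n h p \<noteq> {}"
    unfolding mu_of_def by (rule LeastI[of _ h]) (use Dmu_h_nonempty[OF assms] assms(2) in auto)
  then show "h < 2 * mu_of n h p" "mu_of n h p \<le> h" "Dmin n h p \<noteq> {}" by auto
qed

lemma mu_of_le: "h < 2 * \<mu> \<Longrightarrow> \<mu> \<le> h \<Longrightarrow> Dmu n h \<mu> p \<noteq> {} \<Longrightarrow> mu_of n h p \<le> \<mu>"
  unfolding mu_of_def by (rule Least_le) simp

lemma mu_of_eqI:
  assumes "h < 2 * \<mu>" "\<mu> \<le> h" "Dmu n h \<mu> p \<noteq> {}"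
    and "\<And>\<nu>. h < 2 * \<nu> \<Longrightarrow> \<nu> < \<mu> \<Longrightarrow> Dmu n h \<nu> p = {}"
  shows "mu_of n h p = \<mu>"
  unfolding mu_of_def by (rule Least_equality) (use assms not_le in auto)

lemma Dmin_full_if_meets_rev_two:
  assumes p: "p \<in> profiles 2 h" and h: "1 \<le> h"
    and meet: "Dmin 2 h p \<inter> Dmin 2 h (rev_profile p) \<noteq> {}"
  shows "Dmin 2 h p = {1..2}"
proof (rule ccontr)
  define \<mu> \<nu> where "\<mu> = mu_of 2 h p" and "\<nu> = mu_of 2 h (rev_profile p)"
  have \<mu>: "h < 2 * \<mu>" "\<mu> \<le> h" using mu_of_bounds[OF p h] by (auto simp: \<mu>_def)
  obtain x where x: "x \<in> Dmu 2 h \<mu> p" "x \<in> Dmu 2 h \<nu> (rev_profile p)"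
    using meet by (auto simp: \<mu>_def \<nu>_def)
  assume "Dmin 2 h p \<noteq> {1..2}"
  then obtain z where z: "z \<in> {1..2}" "z \<notin> Dmu 2 h \<mu> p"
    using Dmu_subset[of 2 h \<mu> p] unfolding \<mu>_def by blast
  then obtain w where w: "w \<in> {1..2}" "\<mu> \<le> votes h p w z"
    by (auto simp: Dmu_eq not_less)
  have "x \<in> {1..2}" "x \<noteq> z" using x(1) z(2) Dmu_subset[of 2 h \<mu> p] by auto
  moreover have "w \<noteq> z" using w(2) \<mu>(1) by (auto intro: ccontr)
  ultimately have "w = x" using w(1) z(1) by auto
  have "votes h p z x < \<mu>"
    using votes_add_votes[OF p \<open>x \<in> {1..2}\<close> z(1) \<open>x \<noteq> z\<close>] w(2) \<open>w = x\<close> \<mu>(1) by simp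
  moreover have "y = x \<or> y = z" if "y \<in> {1..2}" for y
    using that z(1) \<open>x \<in> {1..2}\<close> \<open>x \<noteq> z\<close> by auto
  ultimately have "z \<in> Dmu 2 h \<mu> (rev_profile p)"
    using z(1) \<mu>(1) unfolding Dmu_eq votes_rev_profile by force
  then have "\<nu> \<le> \<mu>" unfolding \<nu>_def using \<mu> by (intro mu_of_le) auto
  moreover have "votes h p x z < \<nu>" using x(2) z(1) by (auto simp: Dmu_eq votes_rev_profile)
  ultimately show False using w(2) \<open>w = x\<close> by simp
qed

lemma atLeastAtMost_three_eq:
  "a \<in> {1..3} \<Longrightarrow> b \<in> {1..3} \<Longrightarrow> c \<in> {1..3} \<Longrightarrow> a \<noteq> b \<Longrightarrow> a \<noteq> c \<Longrightarrow> b \<noteq> c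
    \<Longrightarrow> {1..3::nat} = {a, b, c}"
  by auto

lemma atLeastAtMost_three_obtain_others:
  assumes "x \<in> {1..3::nat}"
  obtains u v where "u \<in> {1..3}" "v \<in> {1..3}" "u \<noteq> x" "v \<noteq> x" "u \<noteq> v"
  by (rule that[of "if x = 1 then 2 else 1" "if x = 3 then 2 else 3"]) (use assms in auto)

lemma Dmu_two_rev_profile_nonempty_three_three:
  assumes p: "p \<in> profiles 3 3" and "Dmu 3 3 2 p \<noteq> {}"
  shows "Dmu 3 3 2 (rev_profile p) \<noteq> {}"
proof -
  obtain x where x: "x \<in> {1..3}" "\<And>y. y \<in> {1..3} \<Longrightarrow> votes 3 p y x < 2"
    using assms(2) by (auto simp: Dmu_eq)
  obtain a b where ab: "a \<in> {1..3}" "b \<in> {1..3}" "a \<noteq> x" "b \<noteq> x" "a \<noteq> b"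
    using atLeastAtMost_three_obtain_others[OF x(1)] .
  have N: "{1..3} = {x, a, b}" using atLeastAtMost_three_eq[OF x(1) ab(1,2)] ab(3-5) by auto
  have u_in: "u \<in> Dmu 3 3 2 (rev_profile p)"
    if "u \<in> {a, b}" "v \<in> {a, b}" "u \<noteq> v" "votes 3 p u v < 2" for u v
  proof -
    have "votes 3 p u y < 2" if "y \<in> {x, a, b}" for y
      using that \<open>u \<in> {a, b}\<close> \<open>v \<in> {a, b}\<close> \<open>u \<noteq> v\<close> \<open>votes 3 p u v < 2\<close> x(2) ab(1,2)
      by auto
    then show ?thesis using that ab(1,2) N by (auto simp: Dmu_eq votes_rev_profile)
  qed
  have "votes 3 p a b < 2 \<or> votes 3 p b a < 2"
    using votes_add_votes[OF p ab(2,1) ab(5)[symmetric]] by linarith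
  then show ?thesis using u_in[of a b] u_in[of b a] ab(5) by blast
qed

lemma Dmu_three_full_if_no_majority_winner:
  assumes p: "p \<in> profiles 3 3"
    and no_winner: "Dmu 3 3 2 p = {}" "Dmu 3 3 2 (rev_profile p) = {}"
    and x: "x \<in> Dmu 3 3 3 p" "x \<in> Dmu 3 3 3 (rev_profile p)"
  shows "Dmu 3 3 3 p = {1..3}"
proof (rule ccontr)
  assume "Dmu 3 3 3 p \<noteq> {1..3}"
  then obtain z where z: "z \<in> {1..3}" "z \<notin> Dmu 3 3 3 p"
    using Dmu_subset[of 3 3 3 p] by blast
  then obtain w where w: "w \<in> {1..3}" "3 \<le> votes 3 p w z"
    unfolding Dmu_eq by (auto simp: not_less)
  then have w_unanimous: "votes 3 p w z = 3" using votes_le[of 3 p w z] by simp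
  have x_in: "x \<in> {1..3}" using x(1) Dmu_subset by blast
  have "votes 3 p x z < 3" using x(2) z(1) by (simp add: Dmu_eq votes_rev_profile)
  then have "x \<noteq> w" using w_unanimous by auto
  moreover have "x \<noteq> z" using x(1) z(2) by blast
  moreover have "w \<noteq> z" using w_unanimous by auto
  ultimately have N: "{1..3} = {x, w, z}" using atLeastAtMost_three_eq[OF x_in w(1) z(1)] by blast
  have zw: "votes 3 p z w = 0"
    using votes_add_votes[OF p w(1) z(1) \<open>w \<noteq> z\<close>] w_unanimous by simp
  have "\<exists>y\<in>{1..3}. 2 \<le> votes 3 p y w"
    using w(1) no_winner(1) unfolding Dmu_eq by (auto simp: not_less)
  then have xw: "2 \<le> votes 3 p x w" unfolding N using zw by auto
  have "\<exists>y\<in>{1..3}. 2 \<le> votes 3 p z y"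
    using z(1) no_winner(2) unfolding Dmu_eq votes_rev_profile by (auto simp: not_less)
  then have zx: "2 \<le> votes 3 p z x" unfolding N using zw by auto
  obtain i where i: "i \<in> {1..3}" "above (p i) x w" "above (p i) z x"
    using votes_common_voter[of 3 p x w z x] xw zx by force
  have "above (p i) w z" using w_unanimous i(1) by (simp add: votes_eq_iff_unanimous)
  then show False
    using not_above_cycle[OF profiles_linear_order_on[OF p i(1)] i(2)] i(3) by blast
qed

lemma mu_of_three_voters:
  assumes "p \<in> profiles n 3" "1 \<le> n"
  shows "mu_of n 3 p = (if Dmu n 3 2 p = {} then 3 else 2)"
proof -
  have "mu_of n 3 p = 2 \<or> mu_of n 3 p = 3" "Dmin n 3 p \<noteq> {}"
    using mu_of_bounds[OF assms(1) _ assms(2)] by auto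
  moreover have "Dmu n 3 2 p \<noteq> {} \<Longrightarrow> mu_of n 3 p \<le> 2" by (rule mu_of_le) auto
  ultimately show ?thesis by (cases "Dmu n 3 2 p = {}") auto
qed

lemma Dmin_full_if_meets_rev_three_three:
  assumes p: "p \<in> profiles 3 3" and meet: "Dmin 3 3 p \<inter> Dmin 3 3 (rev_profile p) \<noteq> {}"
  shows "Dmin 3 3 p = {1..3}"
proof -
  have p': "rev_profile p \<in> profiles 3 3" using p by (rule rev_profile_in_profiles)
  have same: "Dmu 3 3 2 p = {} \<longleftrightarrow> Dmu 3 3 2 (rev_profile p) = {}"
    using Dmu_two_rev_profile_nonempty_three_three[OF p] Dmu_two_rev_profile_nonempty_three_three[OF p'] by auto
  show ?thesis
  proof (cases "Dmu 3 3 2 p = {}")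
    case True
    then show ?thesis
      using meet same Dmu_three_full_if_no_majority_winner[OF p]
      by (simp add: mu_of_three_voters[OF p] mu_of_three_voters[OF p']) blast
  next
    case False
    then show ?thesis
      using meet same Dmu_inter_rev_profile_empty[OF p, of 2]
      by (simp add: mu_of_three_voters[OF p] mu_of_three_voters[OF p'])
  qed
qed

definition rank_order :: "nat \<Rightarrow> (nat \<Rightarrow> nat) \<Rightarrow> (nat \<times> nat) set" where
  "rank_order n s = {(u, v). u \<in> {1..n} \<and> v \<in> {1..n} \<and> s u \<le> s v}"

lemma linear_order_on_rank_order:
  assumes "inj_on s {1..n}"
  shows "linear_order_on {1..n} (rank_order n s)"
  using inj_onD[OF assms]
  unfolding linear_order_on_def partial_order_on_def preorder_on_def
    refl_on_def trans_def antisym_def total_on_def rank_order_def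
  by fastforce

lemma above_rank_order:
  "above (rank_order n s) y x \<longleftrightarrow> y \<noteq> x \<and> x \<in> {1..n} \<and> y \<in> {1..n} \<and> s x \<le> s y"
  unfolding above_def rank_order_def by auto

definition rank_123 :: "nat \<Rightarrow> nat \<Rightarrow> nat" where
  "rank_123 n v = (if v = 1 then n + 3 else if v = 2 then n + 2 else if v = 3 then n + 1 else v)"

definition rank_231 :: "nat \<Rightarrow> nat \<Rightarrow> nat" where
  "rank_231 n v = (if v = 1 then 0 else if v = 2 then n + 3 else if v = 3 then n + 2 else v)"

definition rank_312 :: "nat \<Rightarrow> nat \<Rightarrow> nat" where
  "rank_312 n v = (if v = 1 then 1 else if v = 2 then 0 else if v = 3 then n + 3 else v)"

definition cyclic_profile :: "nat \<Rightarrow> nat \<Rightarrow> nat \<Rightarrow> (nat \<times> nat) set" where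
  "cyclic_profile n h i =
     (if i \<le> h div 2 then rank_order n (rank_123 n)
      else if i \<le> 2 * (h div 2) then rank_order n (rank_231 n)
      else rank_order n (rank_312 n))"

lemma cyclic_profile_in_profiles: "cyclic_profile n h \<in> profiles n h"
proof -
  have "inj_on (rank_123 n) {1..n}" "inj_on (rank_231 n) {1..n}" "inj_on (rank_312 n) {1..n}"
    by (auto simp: inj_on_def rank_123_def rank_231_def rank_312_def)
  then show ?thesis
    unfolding profiles_def cyclic_profile_def using linear_order_on_rank_order by simp
qed

lemma card_three_blocks:
  assumes "2 * k \<le> h"
  shows "card {i \<in> {1..h}. if i \<le> k then A else if i \<le> 2 * k then B else C}
       = (if A then k else 0) + (if B then k else 0) + (if C then h - 2 * k else 0)"
proof -
  let ?A = "if A then {1..k} else {}" and ?B = "if B then {k+1..2*k} else {}"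
    and ?C = "if C then {2*k+1..h} else {}"
  have "{i \<in> {1..h}. if i \<le> k then A else if i \<le> 2 * k then B else C} = ?A \<union> ?B \<union> ?C"
    using assms by auto
  moreover have "card (?A \<union> ?B \<union> ?C) = card ?A + card ?B + card ?C"
    by (subst card_Un_disjoint, simp, simp, force)+ simp
  ultimately show ?thesis using assms by simp
qed

lemma votes_cyclic_profile:
  "votes h (cyclic_profile n h) y x =
     (if above (rank_order n (rank_123 n)) y x then h div 2 else 0)
   + (if above (rank_order n (rank_231 n)) y x then h div 2 else 0)
   + (if above (rank_order n (rank_312 n)) y x then h mod 2 else 0)"
proof -
  have "votes h (cyclic_profile n h) y x
      = card {i \<in> {1..h}. if i \<le> h div 2 then above (rank_order n (rank_123 n)) y x
           else if i \<le> 2 * (h div 2) then above (rank_order n (rank_231 n)) y x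
           else above (rank_order n (rank_312 n)) y x}"
    unfolding votes_def by (rule arg_cong[where f = card]) (auto simp: cyclic_profile_def)
  also have "\<dots> = (if above (rank_order n (rank_123 n)) y x then h div 2 else 0)
     + (if above (rank_order n (rank_231 n)) y x then h div 2 else 0)
     + (if above (rank_order n (rank_312 n)) y x then h - 2 * (h div 2) else 0)"
    by (rule card_three_blocks) simp
  finally show ?thesis by (simp add: minus_mult_div_eq_mod)
qed

lemma cyclic_profile_witness:
  assumes n: "3 \<le> n" and h: "2 \<le> h" and not_three_three: "\<not> (n = 3 \<and> h = 3)"
  defines "p \<equiv> cyclic_profile n h"
  shows "Dmin n h p \<noteq> {1..n}" "1 \<in> Dmin n h p \<inter> Dmin n h (rev_profile p)"
proof -
  define k r where "k = h div 2" and "r = h mod 2"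
  have hk: "h = 2 * k + r" "r \<le> 1" "1 \<le> k" using h by (auto simp: k_def r_def)
  have votes: "votes h p y x =
      (if above (rank_order n (rank_123 n)) y x then k else 0)
    + (if above (rank_order n (rank_231 n)) y x then k else 0)
    + (if above (rank_order n (rank_312 n)) y x then r else 0)" for y x
    unfolding p_def k_def r_def by (rule votes_cyclic_profile)
  note ranks = above_rank_order rank_123_def rank_231_def rank_312_def
  have top: "1 \<in> Dmu n h (k + 1 + r) p"
    using n unfolding Dmu_eq votes by (auto simp: ranks)
  have bottom: "1 \<in> Dmu n h (k + 1 + r) (rev_profile p)"
    using n unfolding Dmu_eq votes votes_rev_profile by (auto simp: ranks)
  have no_majority_winner: "Dmu n h (k + 1) p = {}" if "r = 1"
  proof (rule Dmu_emptyI)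
    fix z assume "z \<in> {1..n}"
    then show "\<exists>y\<in>{1..n}. k + 1 \<le> votes h p y z"
      using n that hk(3)
      by (intro bexI[of _ "if z = 1 then 3 else if z = 2 then 1 else if z = 3 then 2 else 3"])
        (auto simp: votes ranks)
  qed
  have no_majority_loser: "Dmu n h (k + 1) (rev_profile p) = {}" if "r = 1"
  proof (rule Dmu_emptyI)
    fix z assume "z \<in> {1..n}"
    then show "\<exists>y\<in>{1..n}. k + 1 \<le> votes h (rev_profile p) y z"
      using n that hk(3)
      by (intro bexI[of _ "if z = 1 then 2 else if z = 2 then 3 else 1"])
        (auto simp: votes votes_rev_profile ranks)
  qed
  have mu: "mu_of n h q = k + 1 + r" if "q \<in> {p, rev_profile p}" for q
  proof (rule mu_of_eqI)
    show "h < 2 * (k + 1 + r)" "k + 1 + r \<le> h" using hk by auto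
    show "Dmu n h (k + 1 + r) q \<noteq> {}" using that top bottom by auto
    fix \<nu> assume "h < 2 * \<nu>" "\<nu> < k + 1 + r"
    then have "r = 1" "\<nu> = k + 1" using hk by auto
    then show "Dmu n h \<nu> q = {}" using that no_majority_winner no_majority_loser by auto
  qed
  then show "1 \<in> Dmin n h p \<inter> Dmin n h (rev_profile p)" using top bottom by simp
  show "Dmin n h p \<noteq> {1..n}"
  proof (cases "n = 3")
    case True
    then have "votes h p 2 3 = 2 * k" by (simp add: votes ranks)
    then have "k + 1 + r \<le> votes h p 2 3" using True not_three_three hk by auto
    then show ?thesis using mu[of p] not_in_DmuI[of 2 n "k + 1 + r" h p 3] n by auto
  next
    case False
    then have "votes h p 3 4 = 2 * k + r" using n by (simp add: votes ranks)
    then have "k + 1 + r \<le> votes h p 3 4" using hk by auto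
    then show ?thesis using mu[of p] not_in_DmuI[of 3 n "k + 1 + r" h p 4] n False by auto
  qed
qed

theorem proposition5:
  fixes n h :: nat
  assumes "n \<ge> 2" and "h \<ge> 2"
  shows "(\<exists>p \<in> profiles n h.
            Dmu n h (mu_of n h p) p \<noteq> {1..n} \<and>
            Dmu n h (mu_of n h p) p \<inter> Dmu n h (mu_of n h (rev_profile p)) (rev_profile p) \<noteq> {})
         \<longleftrightarrow> (h, n) \<notin> T3"
proof
  assume "\<exists>p \<in> profiles n h. Dmin n h p \<noteq> {1..n} \<and> Dmin n h p \<inter> Dmin n h (rev_profile p) \<noteq> {}"
  then obtain p where "p \<in> profiles n h" "Dmin n h p \<noteq> {1..n}"
    "Dmin n h p \<inter> Dmin n h (rev_profile p) \<noteq> {}"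
    by blast
  then show "(h, n) \<notin> T3"
    using Dmin_full_if_meets_rev_two[of p h] Dmin_full_if_meets_rev_three_three[of p] assms(2)
    by (auto simp: T3_def)
next
  assume "(h, n) \<notin> T3"
  then have "3 \<le> n" "\<not> (n = 3 \<and> h = 3)" using assms(1) by (auto simp: T3_def)
  then show "\<exists>p \<in> profiles n h. Dmin n h p \<noteq> {1..n} \<and> Dmin n h p \<inter> Dmin n h (rev_profile p) \<noteq> {}"
    using cyclic_profile_witness[OF _ assms(2)] cyclic_profile_in_profiles by blast
qed

end
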